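(* Let $\theta:[0,1]\to\mathbb R$ be smooth with $\theta>0$ on $(0,1)$, $\theta(0)=\theta(1)=0$, $\theta'(0)>0$, $\theta'(1)<0$, let $V:[0,1]\to\mathbb R$ be smooth, and let $\mathsf d(x,y)=\big|\int_x^y\frac{du}{\sqrt{\theta(u)}}\big|$ on $[0,1]$. Given $X^I\in[0,1]$ and $h>0$, set $X^0=X^I$ and define recursively $$X^{n+1}\in\operatorname*{arg\,min}_{X\in[0,1]}\Big\{\frac1{2h}\mathsf d(X,X^n)^2+V(X)\Big\},\qquad n\ge0,$$ and let $X_h:[0,\infty)\to[0,1]$ be the piecewise-constant interpolation $X_h(0)=X^0$, $X_h(t)=X^{n+1}$ for $t\in(nh,(n+1)h]$. Then for every $T>0$, $X_h$ converges uniformly on $[0,T]$ as $h\to0$ to $X(t)$, the unique solution of the replicator equation $\dot X=-\theta(X)V'(X)$ with $X(0)=X^I$.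
   Context: $\mathsf d$ is the generalised Shahshahani distance, i.e. the geodesic distance on $(0,1)$ for the Riemannian metric $|\zeta|^2_{T_x}=|\zeta|^2/\theta(x)$, extended to $[0,1]$. *)

theory Defs
  imports "HOL-Analysis.Analysis"
begin

text \<open>Smoothness on a set S: derivatives of all orders exist (within S,
  so one-sided at the endpoints of a closed interval).\<close>
definition smooth_on :: "(real \<Rightarrow> real) \<Rightarrow> real set \<Rightarrow> bool" where
  "smooth_on f S \<longleftrightarrow> (\<exists>D :: nat \<Rightarrow> real \<Rightarrow> real. D 0 = f \<and>
     (\<forall>n. \<forall>x\<in>S. (D n has_real_derivative D (Suc n) x) (at x within S)))"

definition shah_dist :: "(real \<Rightarrow> real) \<Rightarrow> real \<Rightarrow> real \<Rightarrow> real" where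
  "shah_dist \<theta> x y = \<bar>LBINT u=x..y. 1 / sqrt (\<theta> u)\<bar>"

definition jko_step :: "(real \<Rightarrow> real) \<Rightarrow> (real \<Rightarrow> real) \<Rightarrow> real \<Rightarrow> real \<Rightarrow> real \<Rightarrow> bool" where
  "jko_step \<theta> V h Xn Xn1 \<longleftrightarrow> Xn1 \<in> {0..1} \<and>
     (\<forall>Y\<in>{0..1}. shah_dist \<theta> Xn1 Xn ^ 2 / (2*h) + V Xn1 \<le> shah_dist \<theta> Y Xn ^ 2 / (2*h) + V Y)"

text \<open>Piecewise-constant interpolation: X_h(0) = X^0, X_h(t) = X^{n+1} on (nh,(n+1)h].\<close>
definition pc_interp :: "real \<Rightarrow> (nat \<Rightarrow> real) \<Rightarrow> real \<Rightarrow> real" where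
  "pc_interp h Xs t = Xs (nat \<lceil>t / h\<rceil>)"

definition replicator_sol :: "(real \<Rightarrow> real) \<Rightarrow> (real \<Rightarrow> real) \<Rightarrow> real \<Rightarrow> (real \<Rightarrow> real) \<Rightarrow> bool" where
  "replicator_sol \<theta> V' X0 X \<longleftrightarrow> X 0 = X0 \<and>
     (\<forall>t\<ge>0. X t \<in> {0..1} \<and>
        (X has_real_derivative - \<theta> (X t) * V' (X t)) (at t within {0..}))"

end

theory Submission
  imports Defs
begin

text \<open>
  The map \<open>S = shah_coord\<close>, \<open>S x = \<integral> du / sqrt (\<theta> u)\<close> (integral from 0 to x),
  identifies \<open>([0,1], d)\<close> isometrically with an interval: the nondegeneracy \<open>\<theta>' 0 > 0 > \<theta>' 1\<close> gives
  \<open>\<theta> u \<ge> c min u (1 - u)\<close>, so \<open>1 / sqrt \<theta>\<close> is integrable and \<open>d x y = \<bar>S x - S y\<bar>\<close>.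
  In the coordinate \<open>\<sigma> = S x\<close> the replicator equation becomes \<open>\<sigma>' = - G\<close> with
  \<open>G = sqrt \<theta> V'\<close>, and the Euler-Lagrange equation of a JKO step reads
  \<open>S X(n+1) + h G X(n+1) = S X(n)\<close>: the scheme is the implicit Euler method for this
  equation. Since \<open>dG/d\<sigma> = \<theta>' V' / 2 + \<theta> V''\<close> is bounded, \<open>G\<close> is Lipschitz in \<open>\<sigma>\<close>,
  so consistency and stability of implicit Euler give \<open>\<bar>S X(n) - S (X (n h))\<bar> = O(h)\<close> on
  bounded time intervals; uniform continuity of the inverse of \<open>S\<close> transfers this to the
  original variable. The solution itself is built by separation of variables for the
  Lipschitz field \<open>- \<theta> V'\<close>, which vanishes at 0 and 1, and is unique by Gronwall.
\<close>

lemma has_real_derivative_unique_Icc: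
  fixes f :: "real \<Rightarrow> real"
  assumes "a < b" "x \<in> {a..b}"
    and "(f has_real_derivative D) (at x within {a..b})"
    and "(f has_real_derivative E) (at x within {a..b})"
  shows "D = E"
  using assms(3,4) by (rule has_field_derivative_unique)
    (use assms(1,2) in \<open>simp add: trivial_limit_within islimpt_Icc\<close>)

lemma smooth_on_imp_C2:
  assumes "smooth_on f S"
  obtains f' f'' where "\<forall>x\<in>S. (f has_real_derivative f' x) (at x within S)"
    and "\<forall>x\<in>S. (f' has_real_derivative f'' x) (at x within S)" and "continuous_on S f''"
proof -
  obtain D where D: "D 0 = f" "\<And>n x. x \<in> S \<Longrightarrow> (D n has_real_derivative D (Suc n) x) (at x within S)"
    using assms unfolding smooth_on_def by blast
  have "continuous_on S (D 2)"
    using D(2)[of _ 2] by (intro DERIV_continuous_on) simp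
  then show thesis
    using D by (intro that[of "D 1" "D 2"]) (auto simp: numeral_2_eq_2)
qed

lemma DERIV_interior_Icc:
  assumes "\<And>x. x \<in> {a..b} \<Longrightarrow> (f has_real_derivative f' x) (at x within {a..b})" "x \<in> {a<..<b}"
  shows "(f has_real_derivative f' x) (at x)"
  using assms(1)[of x] assms(2) at_within_interior[of x "{a..b}"] by auto

lemma DERIV_dominated_imp_bound:
  fixes f g :: "real \<Rightarrow> real"
  assumes "a \<le> b" "continuous_on {a..b} f" "continuous_on {a..b} g"
    and "\<And>x. x \<in> {a<..<b} \<Longrightarrow> (f has_real_derivative f' x) (at x)"
    and "\<And>x. x \<in> {a<..<b} \<Longrightarrow> (g has_real_derivative g' x) (at x)"
    and "\<And>x. x \<in> {a<..<b} \<Longrightarrow> \<bar>f' x\<bar> \<le> B * g' x"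
  shows "\<bar>f b - f a\<bar> \<le> B * (g b - g a)"
proof -
  have mono: "B * g a + s * f a \<le> B * g b + s * f b" if s: "s = 1 \<or> s = -1" for s
  proof (rule DERIV_nonneg_imp_increasing_open[of a b "\<lambda>x. B * g x + s * f x", OF \<open>a \<le> b\<close>])
    fix x assume x: "a < x" "x < b"
    then have "((\<lambda>x. B * g x + s * f x) has_real_derivative B * g' x + s * f' x) (at x)"
      by (intro DERIV_add DERIV_cmult assms(4,5)) auto
    moreover have "0 \<le> B * g' x + s * f' x"
      using assms(6)[of x] x s by (auto simp: abs_le_iff)
    ultimately show "\<exists>y. ((\<lambda>x. B * g x + s * f x) has_real_derivative y) (at x) \<and> 0 \<le> y" by blast
  qed (use assms(2,3) in \<open>intro continuous_intros\<close>)
  have "B * g a + f a \<le> B * g b + f b" "B * g a - f a \<le> B * g b - f b"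
    using mono[of 1] mono[of "-1"] by simp_all
  then show ?thesis unfolding abs_le_iff right_diff_distrib by linarith
qed

lemma DERIV_bounded_imp_lipschitz_nonneg:
  fixes f :: "real \<Rightarrow> real"
  assumes "\<And>t. t \<ge> 0 \<Longrightarrow> (f has_real_derivative f' t) (at t)" "\<And>t. t \<ge> 0 \<Longrightarrow> \<bar>f' t\<bar> \<le> M"
    and "s \<ge> 0" "t \<ge> 0"
  shows "\<bar>f s - f t\<bar> \<le> M * \<bar>s - t\<bar>"
  using field_differentiable_bound[of "{0..}" f f' M s t] assms
  by (auto intro: has_field_derivative_at_within)

lemma argmin_at_sign_change:
  fixes f f' :: "real \<Rightarrow> real"
  assumes cont: "continuous_on {a..b} f" and "r \<in> {a..b}" "m \<in> {a..b}"
    and deriv: "\<And>x. x \<in> {a<..<b} \<Longrightarrow> (f has_real_derivative f' x) (at x)"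
    and "\<And>x. x \<in> {a<..<r} \<Longrightarrow> f' x < 0" "\<And>x. x \<in> {r<..<b} \<Longrightarrow> f' x > 0"
    and min: "\<And>y. y \<in> {a..b} \<Longrightarrow> f m \<le> f y"
  shows "m = r"
proof (rule ccontr)
  assume "m \<noteq> r"
  then consider "m < r" | "r < m" by linarith
  then have "f r < f m"
  proof cases
    case 1
    show ?thesis
    proof (rule DERIV_neg_imp_decreasing_open[OF 1])
      fix x assume "m < x" "x < r"
      then show "\<exists>y. (f has_real_derivative y) (at x) \<and> y < 0"
        using assms(2,3,5) deriv[of x] by auto
    qed (use assms(2,3) in \<open>auto intro: continuous_on_subset[OF cont]\<close>)
  next
    case 2
    show ?thesis
    proof (rule DERIV_pos_imp_increasing_open[OF 2])
      fix x assume "r < x" "x < m"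
      then show "\<exists>y. (f has_real_derivative y) (at x) \<and> y > 0"
        using assms(2,3,6) deriv[of x] by auto
    qed (use assms(2,3) in \<open>auto intro: continuous_on_subset[OF cont]\<close>)
  qed
  then show False using min[of r] \<open>r \<in> {a..b}\<close> by simp
qed

lemma integral_has_real_derivative_interior:
  fixes f :: "real \<Rightarrow> real"
  assumes "continuous_on {l..<b} f" "x \<in> {l<..<b}"
  shows "((\<lambda>y. integral {l..y} f) has_real_derivative f x) (at x)"
proof -
  define c where "c = (x + b) / 2"
  have "continuous_on {l..c} f" using assms
    by (intro continuous_on_subset[OF assms(1)]) (auto simp: c_def)
  then have "((\<lambda>y. integral {l..y} f) has_real_derivative f x) (at x within {l..c})"
    using assms(2) by (intro integral_has_real_derivative) (auto simp: c_def)
  moreover have "at x within {l..c} = at x" using assms(2)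
    by (intro at_within_interior) (auto simp: c_def)
  ultimately show ?thesis by simp
qed

lemma IVT_ray:
  fixes \<Phi> :: "real \<Rightarrow> real"
  assumes cont: "\<And>p q. a \<le> p \<Longrightarrow> q < b \<Longrightarrow> continuous_on {p..q} \<Phi>"
    and unbounded: "\<And>y. \<exists>x\<in>{a..<b}. y \<le> \<Phi> x"
  shows "{\<Phi> a..} \<subseteq> \<Phi> ` {a..<b}"
proof
  fix y assume "y \<in> {\<Phi> a..}"
  moreover obtain x where x: "x \<in> {a..<b}" "y \<le> \<Phi> x" using unbounded by blast
  ultimately obtain z where "a \<le> z" "z \<le> x" "\<Phi> z = y"
    using IVT'[of \<Phi> a y x] cont[of a x] by auto
  then show "y \<in> \<Phi> ` {a..<b}" using x by (intro image_eqI[where x=z]) auto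
qed

lemma inv_sqrt_boundary_integrable:
  "set_integrable lborel {0<..<1::real} (\<lambda>u. 1 / sqrt u + 1 / sqrt (1 - u))"
proof -
  let ?h = "\<lambda>u::real. 1 / sqrt u + 1 / sqrt (1 - u)"
  have "(?h has_integral ((2 * sqrt 1 - 2 * sqrt (1 - 1)) - (2 * sqrt 0 - 2 * sqrt (1 - 0)))) {0..1}"
  proof (rule fundamental_theorem_of_calculus_interior)
    show "continuous_on {0..1} (\<lambda>u::real. 2 * sqrt u - 2 * sqrt (1 - u))"
      by (intro continuous_intros)
    fix x :: real assume x: "x \<in> {0<..<1}"
    have "((\<lambda>u. 2 * sqrt u - 2 * sqrt (1 - u)) has_real_derivative
        2 * (inverse (sqrt x) / 2) - 2 * (inverse (sqrt (1 - x)) / 2 * (0 - 1))) (at x)"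
      using x
      by (intro DERIV_diff DERIV_cmult DERIV_real_sqrt DERIV_chain2[where f=sqrt] derivative_intros) auto
    then show "((\<lambda>u. 2 * sqrt u - 2 * sqrt (1 - u)) has_vector_derivative ?h x) (at x)"
      by (simp add: has_real_derivative_iff_has_vector_derivative[symmetric] inverse_eq_divide)
  qed simp
  then have "?h integrable_on {0..1}" by blast
  then have "?h integrable_on {0<..<1}"
    using integrable_on_open_interval[of ?h 0 1] by simp
  then have "?h absolutely_integrable_on {0<..<1}"
    by (rule nonnegative_absolutely_integrable_1) auto
  then show ?thesis
    unfolding set_integrable_def
    using integrable_completion[of "\<lambda>x. indicator {0<..<1::real} x *\<^sub>R ?h x"]
    by (auto intro!: borel_measurable_continuous_on_indicator continuous_intros)
qed

section \<open>Scalar autonomous ODEs\<close>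

lemma lipschitz_ode_unique:
  fixes F Y Z :: "real \<Rightarrow> real"
  assumes lip: "K-lipschitz_on A F" and "Y 0 = Z 0"
    and Y: "\<And>t. t \<ge> 0 \<Longrightarrow> Y t \<in> A \<and> (Y has_real_derivative F (Y t)) (at t within {0..})"
    and Z: "\<And>t. t \<ge> 0 \<Longrightarrow> Z t \<in> A \<and> (Z has_real_derivative F (Z t)) (at t within {0..})"
    and "t \<ge> 0"
  shows "Y t = Z t"
proof -
  define w where "w s = (Y s - Z s)\<^sup>2 * exp (- (2 * K) * s)" for s
  define w' where
    "w' s = 2 * exp (- (2 * K) * s) * ((Y s - Z s) * (F (Y s) - F (Z s)) - K * (Y s - Z s)\<^sup>2)" for s
  have w_deriv: "(w has_real_derivative w' s) (at s within {0..})" if "s \<ge> 0" for s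
  proof -
    have "(w has_real_derivative 2 * (Y s - Z s) * (F (Y s) - F (Z s)) * exp (- (2 * K) * s)
        + (Y s - Z s)\<^sup>2 * (exp (- (2 * K) * s) * (- (2 * K)))) (at s within {0..})"
      unfolding w_def using Y[OF that] Z[OF that] by (auto intro!: derivative_eq_intros)
    then show ?thesis by (simp add: w'_def algebra_simps)
  qed
  have w'_nonpos: "w' s \<le> 0" if "s \<ge> 0" for s
  proof -
    let ?d = "Y s - Z s"
    have "?d * (F (Y s) - F (Z s)) \<le> \<bar>?d\<bar> * \<bar>F (Y s) - F (Z s)\<bar>"
      by (metis abs_ge_self abs_mult)
    also have "\<dots> \<le> \<bar>?d\<bar> * (K * \<bar>?d\<bar>)"
      using lipschitz_onD[OF lip, of "Y s" "Z s"] Y[OF that] Z[OF that]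
      by (intro mult_left_mono) (auto simp: dist_real_def)
    also have "\<dots> = K * ?d\<^sup>2"
      by (simp only: mult.left_commute[of "\<bar>?d\<bar>"] abs_mult_self_eq power2_eq_square)
    finally show ?thesis unfolding w'_def by (intro mult_nonneg_nonpos) auto
  qed
  have "w t \<le> w 0"
  proof (rule DERIV_nonpos_imp_decreasing_open[OF \<open>t \<ge> 0\<close>])
    fix s assume s: "0 < s" "s < t"
    then have "at s within {0..} = at s" by (intro at_within_interior) auto
    then show "\<exists>y. (w has_real_derivative y) (at s) \<and> y \<le> 0"
      using w_deriv[of s] w'_nonpos[of s] s by (intro exI[of _ "w' s"]) simp
  next
    have "continuous_on {0..} w" using w_deriv by (intro DERIV_continuous_on) auto
    then show "continuous_on {0..t} w" by (rule continuous_on_subset) auto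
  qed
  also have "w 0 = 0" using \<open>Y 0 = Z 0\<close> by (simp add: w_def)
  finally have "(Y t - Z t)\<^sup>2 * exp (- (2 * K) * t) \<le> 0" by (simp only: w_def)
  then have "(Y t - Z t)\<^sup>2 \<le> 0" by (simp add: mult_le_0_iff)
  then show ?thesis by simp
qed

lemma inverse_has_real_derivative_on_ray:
  fixes \<Phi> \<phi> :: "real \<Rightarrow> real"
  assumes deriv: "\<And>x. x \<in> {l<..<b} \<Longrightarrow> (\<Phi> has_real_derivative \<phi> x) (at x)"
    and pos: "\<And>x. x \<in> {l<..<b} \<Longrightarrow> \<phi> x > 0"
    and onto: "{a<..} \<subseteq> \<Phi> ` {l<..<b}"
  obtains X where "\<And>x. x \<in> {l<..<b} \<Longrightarrow> X (\<Phi> x) = x"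
    and "\<And>y. y > a \<Longrightarrow> X y \<in> {l<..<b} \<and> \<Phi> (X y) = y \<and> (X has_real_derivative 1 / \<phi> (X y)) (at y)"
proof
  define X where "X = inv_into {l<..<b} \<Phi>"
  have "strict_mono_on {l<..<b} \<Phi>"
  proof (rule strict_mono_onI)
    fix x y assume xy: "x \<in> {l<..<b}" "y \<in> {l<..<b}" "x < y"
    show "\<Phi> x < \<Phi> y"
    proof (rule DERIV_pos_imp_increasing[OF \<open>x < y\<close>])
      fix z assume "x \<le> z" "z \<le> y"
      then have "z \<in> {l<..<b}" using xy by auto
      then show "\<exists>D. (\<Phi> has_real_derivative D) (at z) \<and> D > 0" using deriv pos by blast
    qed
  qed
  then show X\<Phi>: "X (\<Phi> z) = z" if "z \<in> {l<..<b}" for z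
    using that by (simp add: X_def strict_mono_on_imp_inj_on)
  have \<Phi>X: "\<Phi> (X y) = y" "X y \<in> {l<..<b}" if "y > a" for y
  proof -
    have "y \<in> \<Phi> ` {l<..<b}" using onto that by auto
    then show "\<Phi> (X y) = y" "X y \<in> {l<..<b}" unfolding X_def by (rule f_inv_into_f, rule inv_into_into)
  qed
  fix y assume "y > a"
  define d where "d = min (X y - l) (b - X y) / 2"
  have near: "z \<in> {l<..<b}" if "\<bar>z - X y\<bar> \<le> d" for z
    using that \<Phi>X(2)[OF \<open>y > a\<close>] unfolding d_def abs_le_iff by auto
  have "isCont X (\<Phi> (X y))"
  proof (rule isCont_inverse_function[where f=\<Phi> and g=X and x="X y" and d=d])
    show "0 < d" using \<Phi>X(2)[OF \<open>y > a\<close>] by (simp add: d_def)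
  qed (use near X\<Phi> DERIV_isCont[OF deriv] in auto)
  then have "(X has_real_derivative inverse (\<phi> (X y))) (at y)"
  proof (intro DERIV_inverse_function[where f=\<Phi> and a=a and b="y + 1"])
    show "(\<Phi> has_real_derivative \<phi> (X y)) (at (X y))" "\<phi> (X y) \<noteq> 0"
      using deriv pos \<Phi>X(2)[OF \<open>y > a\<close>] by (auto simp: less_imp_neq[symmetric])
  qed (use \<open>y > a\<close> \<Phi>X in auto)
  then show "X y \<in> {l<..<b} \<and> \<Phi> (X y) = y \<and> (X has_real_derivative 1 / \<phi> (X y)) (at y)"
    using \<Phi>X[OF \<open>y > a\<close>] by (simp add: inverse_eq_divide)
qed

text \<open>A field vanishing at most linearly at \<open>b\<close> needs infinite time to reach \<open>b\<close>.\<close>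
lemma antiderivative_inverse_ge_log:
  fixes F \<Phi> :: "real \<Rightarrow> real"
  assumes deriv: "\<And>x. x \<in> {x0..<b} \<Longrightarrow> (\<Phi> has_real_derivative 1 / F x) (at x)"
    and pos: "\<And>x. x \<in> {x0..<b} \<Longrightarrow> F x > 0" and lin: "\<And>x. x \<in> {x0..<b} \<Longrightarrow> F x \<le> K * (b - x)"
    and "K > 0" "x0 \<le> x" "x < b"
  shows "(ln (b - x0) - ln (b - x)) / K \<le> \<Phi> x - \<Phi> x0"
proof -
  define H where "H z = \<Phi> z + ln (b - z) / K" for z
  have "H x0 \<le> H x"
  proof (rule DERIV_nonneg_imp_nondecreasing[OF \<open>x0 \<le> x\<close>])
    fix z assume z: "x0 \<le> z" "z \<le> x"
    then have bz: "b - z > 0" using \<open>x < b\<close> by auto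
    have "((\<lambda>z. ln (b - z) / K) has_real_derivative inverse (b - z) * (0 - 1) / K) (at z)"
      using bz by (intro DERIV_cdivide DERIV_chain2[OF DERIV_ln] derivative_intros)
    then have "(H has_real_derivative 1 / F z + inverse (b - z) * (0 - 1) / K) (at z)"
      unfolding H_def[abs_def] using z \<open>x < b\<close> by (intro DERIV_add deriv) auto
    moreover have "inverse (b - z) * (0 - 1) / K = - (1 / (K * (b - z)))"
      using bz \<open>K > 0\<close> by (simp add: field_simps)
    moreover have "1 / (K * (b - z)) \<le> 1 / F z"
      using pos[of z] lin[of z] z \<open>x < b\<close> by (intro divide_left_mono) auto
    ultimately show "\<exists>y. (H has_real_derivative y) (at z) \<and> 0 \<le> y" by force
  qed
  then show ?thesis by (simp add: H_def diff_divide_distrib)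
qed

lemma ode_time_function_exists:
  fixes F :: "real \<Rightarrow> real"
  assumes "l < x0" "x0 < b" "K > 0"
    and cont: "continuous_on {l..<b} F" and pos: "\<And>x. x \<in> {l..<b} \<Longrightarrow> F x > 0"
    and lin: "\<And>x. x \<in> {x0..<b} \<Longrightarrow> F x \<le> K * (b - x)"
  obtains \<Phi> a where "a < 0" "\<Phi> x0 = 0" "\<forall>x\<in>{l<..<b}. (\<Phi> has_real_derivative 1 / F x) (at x)"
    and "{a<..} \<subseteq> \<Phi> ` {l<..<b}"
proof -
  define \<Phi> where "\<Phi> x = integral {l..x} (\<lambda>u. 1 / F u) - integral {l..x0} (\<lambda>u. 1 / F u)" for x
  have "continuous_on {l..<b} (\<lambda>u. 1 / F u)"
    using pos by (intro continuous_intros cont) force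
  then have \<Phi>_deriv: "(\<Phi> has_real_derivative 1 / F x) (at x)" if "x \<in> {l<..<b}" for x
    using DERIV_diff[OF integral_has_real_derivative_interior DERIV_const] that
    unfolding \<Phi>_def[abs_def] by fastforce
  have \<Phi>_cont: "continuous_on {p..q} \<Phi>" if "l < p" "q < b" for p q
    using that by (intro continuous_at_imp_continuous_on ballI DERIV_isCont[OF \<Phi>_deriv]) auto
  have \<Phi>_strict: "\<Phi> x < \<Phi> y" if "l < x" "x < y" "y < b" for x y
  proof (rule DERIV_pos_imp_increasing[OF \<open>x < y\<close>])
    fix z assume "x \<le> z" "z \<le> y"
    with that show "\<exists>D. (\<Phi> has_real_derivative D) (at z) \<and> D > 0"
      using \<Phi>_deriv[of z] pos[of z] by (intro exI[of _ "1 / F z"]) auto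
  qed
  have \<Phi>_x0: "\<Phi> x0 = 0" by (simp add: \<Phi>_def)
  have \<Phi>_ge_log: "(ln (b - x0) - ln (b - x)) / K \<le> \<Phi> x" if "x0 \<le> x" "x < b" for x
    using antiderivative_inverse_ge_log[of x0 b \<Phi> F K x] \<Phi>_deriv pos lin that assms(1,3) \<Phi>_x0 by force
  have unbounded: "\<exists>x\<in>{x0..<b}. y \<le> \<Phi> x" if "y \<ge> 0" for y
  proof
    define x where "x = b - (b - x0) * exp (- K * y)"
    have "(b - x0) * exp (- K * y) \<le> b - x0" "0 < (b - x0) * exp (- K * y)"
      using that \<open>K > 0\<close> \<open>x0 < b\<close> by (auto intro: mult_left_le)
    then show x: "x \<in> {x0..<b}" unfolding x_def by simp
    have "ln (b - x) = ln (b - x0) - K * y"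
      using \<open>x0 < b\<close> by (simp add: x_def ln_mult)
    then show "y \<le> \<Phi> x" using \<Phi>_ge_log[of x] x \<open>K > 0\<close> by simp
  qed
  define l' where "l' = (l + x0) / 2"
  have l': "l < l'" "l' < x0" using \<open>l < x0\<close> by (auto simp: l'_def)
  have "{\<Phi> l'<..} \<subseteq> {\<Phi> l'..}" by auto
  also have "\<dots> \<subseteq> \<Phi> ` {l'..<b}"
  proof (rule IVT_ray)
    show "continuous_on {p..q} \<Phi>" if "l' \<le> p" "q < b" for p q using \<Phi>_cont that l' by simp
    show "\<exists>x\<in>{l'..<b}. y \<le> \<Phi> x" for y
    proof (cases "y \<ge> 0")
      case True
      then show ?thesis using unbounded[of y] l' by force
    next
      case False
      then show ?thesis using \<Phi>_x0 l' \<open>x0 < b\<close> by (intro bexI[of _ x0]) auto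
    qed
  qed
  also have "\<dots> \<subseteq> \<Phi> ` {l<..<b}" using l' by (intro image_mono) auto
  finally have onto: "{\<Phi> l'<..} \<subseteq> \<Phi> ` {l<..<b}" .
  have "\<Phi> l' < 0" using \<Phi>_strict[of l' x0] l' \<open>x0 < b\<close> \<Phi>_x0 by simp
  with \<Phi>_x0 \<Phi>_deriv onto show thesis by (intro that) auto
qed

lemma autonomous_ode_exists_increasing:
  fixes F :: "real \<Rightarrow> real"
  assumes "l < x0" "x0 < b" "K > 0"
    and "continuous_on {l..<b} F" and pos: "\<And>x. x \<in> {l..<b} \<Longrightarrow> F x > 0"
    and "\<And>x. x \<in> {x0..<b} \<Longrightarrow> F x \<le> K * (b - x)"
  obtains X where "X 0 = x0" "\<And>t. t \<ge> 0 \<Longrightarrow> X t \<in> {x0..<b} \<and> (X has_real_derivative F (X t)) (at t)"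
proof -
  obtain \<Phi> a where "a < 0" and \<Phi>_x0: "\<Phi> x0 = 0"
    and \<Phi>_deriv: "\<forall>x\<in>{l<..<b}. (\<Phi> has_real_derivative 1 / F x) (at x)"
    and onto: "{a<..} \<subseteq> \<Phi> ` {l<..<b}"
    by (rule ode_time_function_exists[OF assms])
  have pos': "1 / F x > 0" if "x \<in> {l<..<b}" for x using pos[of x] that by simp
  obtain X where X\<Phi>: "\<And>x. x \<in> {l<..<b} \<Longrightarrow> X (\<Phi> x) = x"
    and X: "\<And>y. y > a \<Longrightarrow> X y \<in> {l<..<b} \<and> \<Phi> (X y) = y
      \<and> (X has_real_derivative 1 / (1 / F (X y))) (at y)"
    using inverse_has_real_derivative_on_ray[of l b \<Phi> "\<lambda>x. 1 / F x" a] \<Phi>_deriv pos' onto by blast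
  have X_deriv: "(X has_real_derivative F (X y)) (at y)" "X y \<in> {l<..<b}" if "y \<ge> 0" for y
    using X[of y] that \<open>a < 0\<close> by simp_all
  have X0: "X 0 = x0" using X\<Phi>[of x0] \<Phi>_x0 assms(1,2) by simp
  have X_range: "X t \<in> {x0..<b}" if "t \<ge> 0" for t
  proof -
    have "X 0 \<le> X t"
    proof (rule DERIV_nonneg_imp_nondecreasing[OF that])
      fix z assume "0 \<le> z" "z \<le> t"
      then show "\<exists>D. (X has_real_derivative D) (at z) \<and> D \<ge> 0"
        using X_deriv[of z] pos[of "X z"] by (intro exI[of _ "F (X z)"]) simp
    qed
    then show ?thesis using X_deriv(2)[OF that] X0 by simp
  qed
  show thesis by (rule that[of X]) (use X0 X_deriv X_range in auto)
qed

lemma positive_between_zeros: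
  fixes F :: "real \<Rightarrow> real"
  assumes cont: "continuous_on {0..1} F" and "F 0 = 0" "F 1 = 0" "x0 \<in> {0..1}" "F x0 > 0"
  obtains a b where "0 \<le> a" "a < x0" "x0 < b" "b \<le> 1" "F b = 0" "\<forall>x\<in>{a<..<b}. F x > 0"
proof -
  define Z where "Z = {0..1} \<inter> F -` {0}"
  have "closed Z" unfolding Z_def by (intro continuous_closed_preimage cont) auto
  define a where "a = Sup (Z \<inter> {..x0})"
  define b where "b = Inf (Z \<inter> {x0..})"
  have bdd: "bdd_above (Z \<inter> {..x0})" "bdd_below (Z \<inter> {x0..})"
    by (auto intro: bdd_above_Int2 bdd_below_Int2)
  have "0 \<in> Z \<inter> {..x0}" "1 \<in> Z \<inter> {x0..}" using assms(2-4) by (auto simp: Z_def)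
  then have "a \<in> Z \<inter> {..x0}" "b \<in> Z \<inter> {x0..}" unfolding a_def b_def
    using closed_Int[OF \<open>closed Z\<close> closed_atMost] closed_Int[OF \<open>closed Z\<close> closed_atLeast] bdd
    by (metis closed_contains_Sup empty_iff, metis closed_contains_Inf empty_iff)
  then have ab: "0 \<le> a" "a < x0" "x0 < b" "b \<le> 1" "F b = 0"
    using \<open>F x0 > 0\<close> by (auto simp: Z_def less_le)
  have "F x > 0" if x: "a < x" "x < b" for x
  proof (rule ccontr)
    assume "\<not> F x > 0"
    then have Fx: "F x \<le> 0" by simp
    have x01: "x \<in> {0..1}" using x ab by auto
    show False
    proof (cases "x \<le> x0")
      case True
      then obtain w where w: "x \<le> w" "w \<le> x0" "F w = 0"
        using IVT'[of F x 0 x0] Fx \<open>F x0 > 0\<close> continuous_on_subset[OF cont, of "{x..x0}"] x01 assms(4)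
        by auto
      then have "w \<le> a" unfolding a_def using x01 assms(4) bdd(1)
        by (intro cSup_upper) (auto simp: Z_def)
      then show False using w x by simp
    next
      case False
      then obtain w where w: "x0 \<le> w" "w \<le> x" "F w = 0"
        using IVT2'[of F x 0 x0] Fx \<open>F x0 > 0\<close> continuous_on_subset[OF cont, of "{x0..x}"] x01 assms(4)
        by auto
      then have "b \<le> w" unfolding b_def using x01 assms(4) bdd(2)
        by (intro cInf_lower) (auto simp: Z_def)
      then show False using w x by simp
    qed
  qed
  with ab show thesis by (intro that) auto
qed

lemma lipschitz_ode_exists_pos:
  fixes F :: "real \<Rightarrow> real"
  assumes lip: "K-lipschitz_on {0..1} F" and "F 0 = 0" "F 1 = 0" "x0 \<in> {0..1}" "F x0 > 0"
  obtains X where "X 0 = x0" "\<And>t. t \<ge> 0 \<Longrightarrow> X t \<in> {0<..<1} \<and> (X has_real_derivative F (X t)) (at t)"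
proof -
  have cont: "continuous_on {0..1} F" using lip by (rule lipschitz_on_continuous_on)
  obtain a b where ab: "0 \<le> a" "a < x0" "x0 < b" "b \<le> 1" "F b = 0" and pos: "\<forall>x\<in>{a<..<b}. F x > 0"
    by (rule positive_between_zeros[OF cont assms(2-5)])
  define l where "l = (a + x0) / 2"
  have l: "a < l" "l < x0" using ab by (auto simp: l_def)
  have lin: "F x \<le> (K + 1) * (b - x)" if "x \<in> {x0..<b}" for x
  proof -
    have "F x \<le> K * \<bar>x - b\<bar>"
      using lipschitz_onD[OF lip, of x b] that ab by (auto simp: dist_real_def)
    also have "\<dots> \<le> (K + 1) * (b - x)" using that by (simp add: algebra_simps)
    finally show ?thesis .
  qed
  have "continuous_on {l..<b} F" using l ab by (intro continuous_on_subset[OF cont]) auto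
  moreover have "\<And>x. x \<in> {l..<b} \<Longrightarrow> F x > 0" using pos l by auto
  moreover have "K + 1 > 0" using lipschitz_on_nonneg[OF lip] by simp
  ultimately obtain X where "X 0 = x0"
    "\<And>t. t \<ge> 0 \<Longrightarrow> X t \<in> {x0..<b} \<and> (X has_real_derivative F (X t)) (at t)"
    using autonomous_ode_exists_increasing[of l x0 b "K + 1" F] l ab lin by blast
  then show thesis using ab by (intro that[of X]) force+
qed

lemma lipschitz_ode_exists_Icc:
  fixes F :: "real \<Rightarrow> real"
  assumes lip: "K-lipschitz_on {0..1} F" and "F 0 = 0" "F 1 = 0" "x0 \<in> {0..1}"
  obtains X where "X 0 = x0" "\<And>t. t \<ge> 0 \<Longrightarrow> X t \<in> {0..1} \<and> (X has_real_derivative F (X t)) (at t)"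
    and "(\<forall>t\<ge>0. X t \<in> {0<..<1}) \<or> (F x0 = 0 \<and> (\<forall>t. X t = x0))"
proof -
  consider "F x0 > 0" | "F x0 = 0" | "F x0 < 0" by linarith
  then show thesis
  proof cases
    case 1
    then obtain X where X: "X 0 = x0"
      "\<And>t. t \<ge> 0 \<Longrightarrow> X t \<in> {0<..<1} \<and> (X has_real_derivative F (X t)) (at t)"
      using lipschitz_ode_exists_pos[OF assms] by blast
    have "X t \<in> {0..1}" if "t \<ge> 0" for t using X(2)[OF that] by simp
    with X show thesis by (intro that[of X]) auto
  next
    case 2
    then show thesis using \<open>x0 \<in> {0..1}\<close> by (intro that[of "\<lambda>t. x0"]) auto
  next
    case 3
    define G where "G y = - F (1 - y)" for y
    have "K-lipschitz_on {0..1} G"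
    proof (rule lipschitz_onI)
      fix x y :: real assume "x \<in> {0..1}" "y \<in> {0..1}"
      then show "dist (G x) (G y) \<le> K * dist x y"
        using lipschitz_onD[OF lip, of "1 - x" "1 - y"]
        by (simp add: G_def dist_real_def abs_minus_commute)
    qed (rule lipschitz_on_nonneg[OF lip])
    then obtain Y where Y: "Y 0 = 1 - x0"
      "\<And>t. t \<ge> 0 \<Longrightarrow> Y t \<in> {0<..<1} \<and> (Y has_real_derivative G (Y t)) (at t)"
      using lipschitz_ode_exists_pos[of K G "1 - x0"] 3 assms(2-4) by (auto simp: G_def)
    have "1 - Y t \<in> {0<..<1}" "1 - Y t \<in> {0..1}"
      "((\<lambda>t. 1 - Y t) has_real_derivative F (1 - Y t)) (at t)" if "t \<ge> 0" for t
      using Y(2)[OF that] by (auto intro!: derivative_eq_intros simp: G_def)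
    then show thesis using Y(1) by (intro that[of "\<lambda>t. 1 - Y t"]) auto
  qed
qed

section \<open>The implicit Euler scheme\<close>

lemma linear_recursion_bound:
  fixes a :: "nat \<Rightarrow> real"
  assumes "a 0 \<le> 0" "c \<ge> 0" "q \<ge> 1" "\<And>n. a (Suc n) \<le> (a n + c) * q"
  shows "a n \<le> n * c * q ^ n"
proof (induction n)
  case 0 then show ?case using assms(1) by simp
next
  case (Suc n)
  have "c * 1 \<le> c * q ^ n" using one_le_power[OF assms(3)] assms(2) by (rule mult_left_mono)
  with Suc.IH have "a n + c \<le> n * c * q ^ n + c * q ^ n" by linarith
  then have "(a n + c) * q \<le> (n * c * q ^ n + c * q ^ n) * q" using assms(3)
    by (simp add: mult_right_mono)
  also have "\<dots> = Suc n * c * q ^ Suc n" by (simp add: algebra_simps)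
  finally show ?case using assms(4)[of n] by linarith
qed

lemma implicit_euler_local_error:
  fixes f u :: "real \<Rightarrow> real"
  assumes lip: "L-lipschitz_on P f" and bnd: "\<And>p. p \<in> P \<Longrightarrow> \<bar>f p\<bar> \<le> M"
    and u: "\<And>t. t \<ge> 0 \<Longrightarrow> u t \<in> P \<and> (u has_real_derivative - f (u t)) (at t)"
    and "t \<ge> 0" "h \<ge> 0"
  shows "\<bar>u (t + h) - u t + h * f (u (t + h))\<bar> \<le> L * M * h\<^sup>2"
proof -
  define \<rho> where "\<rho> \<tau> = u \<tau> + \<tau> * f (u (t + h))" for \<tau>
  have "norm (\<rho> (t + h) - \<rho> t) \<le> (L * (M * h)) * norm (t + h - t)"
  proof (rule field_differentiable_bound[of "{t..t + h}" \<rho> "\<lambda>\<tau>. f (u (t + h)) - f (u \<tau>)"])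
    fix \<tau> assume \<tau>: "\<tau> \<in> {t..t + h}"
    then have "(\<rho> has_real_derivative - f (u \<tau>) + 1 * f (u (t + h))) (at \<tau>)"
      unfolding \<rho>_def[abs_def] using u[of \<tau>] \<open>t \<ge> 0\<close>
      by (intro DERIV_add DERIV_cmult_right DERIV_ident) auto
    then show "(\<rho> has_field_derivative f (u (t + h)) - f (u \<tau>)) (at \<tau> within {t..t + h})"
      by (simp add: has_field_derivative_at_within)
    have "\<bar>u (t + h) - u \<tau>\<bar> \<le> M * \<bar>t + h - \<tau>\<bar>"
      by (rule DERIV_bounded_imp_lipschitz_nonneg[of u "\<lambda>t. - f (u t)"])
        (use u bnd \<tau> \<open>t \<ge> 0\<close> in auto)
    also have "\<dots> \<le> M * h" using \<tau> u[of t] bnd[of "u t"] \<open>t \<ge> 0\<close> by (intro mult_left_mono) auto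
    finally have "\<bar>u (t + h) - u \<tau>\<bar> \<le> M * h" .
    then have "L * \<bar>u (t + h) - u \<tau>\<bar> \<le> L * (M * h)"
      using lipschitz_on_nonneg[OF lip] by (rule mult_left_mono)
    then show "norm (f (u (t + h)) - f (u \<tau>)) \<le> L * (M * h)"
      using lipschitz_onD[OF lip, of "u (t + h)" "u \<tau>"] u \<tau> \<open>t \<ge> 0\<close> by (simp add: dist_real_def)
  qed (use \<open>h \<ge> 0\<close> in auto)
  then show ?thesis using \<open>h \<ge> 0\<close> by (simp add: \<rho>_def power2_eq_square algebra_simps)
qed

lemma absorb_small_multiple:
  fixes a b e :: real
  assumes "0 \<le> a" "a \<le> 1 / 2" "0 \<le> e" "e \<le> b + a * e"
  shows "e \<le> b * exp (2 * a)"
proof -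
  have "0 \<le> (1 / 2 - a) * e" using assms by simp
  then have "e \<le> 2 * b" using assms(4) by (simp add: algebra_simps)
  then have "a * e \<le> a * (2 * b)" using assms(1) by (rule mult_left_mono)
  then have "e \<le> b * (1 + 2 * a)" using assms(4) by (simp add: algebra_simps)
  also have "\<dots> \<le> b * exp (2 * a)"
    using \<open>e \<le> 2 * b\<close> assms(3) by (intro mult_left_mono exp_ge_add_one_self) auto
  finally show ?thesis .
qed

lemma implicit_euler_error:
  fixes f u :: "real \<Rightarrow> real" and y :: "nat \<Rightarrow> real"
  assumes lip: "L-lipschitz_on P f" and bnd: "\<And>p. p \<in> P \<Longrightarrow> \<bar>f p\<bar> \<le> M"
    and u: "\<And>t. t \<ge> 0 \<Longrightarrow> u t \<in> P \<and> (u has_real_derivative - f (u t)) (at t)"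
    and y: "\<And>n. y n \<in> P" "y 0 = u 0" "\<And>n. y (Suc n) + h * f (y (Suc n)) = y n"
    and h: "h > 0" "h * L \<le> 1 / 2"
  shows "\<bar>y n - u (n * h)\<bar> \<le> n * (L * M * h\<^sup>2) * exp (2 * L * (n * h))"
proof -
  define e where "e n = \<bar>y n - u (n * h)\<bar>" for n
  have L: "L \<ge> 0" by (rule lipschitz_on_nonneg[OF lip])
  have M: "M \<ge> 0" using bnd[OF y(1)[of 0]] by linarith
  have step: "e (Suc n) \<le> (e n + L * M * h\<^sup>2) * exp (2 * (h * L))" for n
  proof (rule absorb_small_multiple)
    define t where "t = n * h"
    have t: "t \<ge> 0" "Suc n * h = t + h" using h by (simp_all add: t_def algebra_simps)
    have "y (Suc n) - u (t + h) = (y n - u t) - h * (f (y (Suc n)) - f (u (t + h)))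
        - (u (t + h) - u t + h * f (u (t + h)))"
      using y(3)[of n] by (simp add: algebra_simps)
    then have "e (Suc n) \<le> e n + \<bar>u (t + h) - u t + h * f (u (t + h))\<bar>
        + \<bar>h * (f (y (Suc n)) - f (u (t + h)))\<bar>"
      unfolding e_def t(2) t_def[symmetric] by linarith
    also have "\<bar>u (t + h) - u t + h * f (u (t + h))\<bar> \<le> L * M * h\<^sup>2"
      using implicit_euler_local_error[OF lip bnd u t(1)] h by simp
    also have "\<bar>h * (f (y (Suc n)) - f (u (t + h)))\<bar> \<le> h * L * e (Suc n)"
      using lipschitz_onD[OF lip y(1)[of "Suc n"], of "u (t + h)"] u[of "t + h"] t h
      by (simp add: abs_mult e_def dist_real_def mult.assoc mult_left_mono)
    finally show "e (Suc n) \<le> e n + L * M * h\<^sup>2 + h * L * e (Suc n)" by simp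
  qed (use h L in \<open>simp_all add: e_def\<close>)
  have "e n \<le> n * (L * M * h\<^sup>2) * exp (2 * (h * L)) ^ n"
    using L M h by (intro linear_recursion_bound step) (auto simp: e_def y(2))
  also have "exp (2 * (h * L)) ^ n = exp (2 * L * (n * h))"
    by (simp add: exp_of_nat_mult[symmetric] algebra_simps)
  finally show ?thesis by (simp add: e_def)
qed

section \<open>The Shahshahani coordinate\<close>

locale shahshahani_weight =
  fixes \<theta> \<theta>' :: "real \<Rightarrow> real"
  assumes theta_deriv: "\<And>x. x \<in> {0..1} \<Longrightarrow> (\<theta> has_real_derivative \<theta>' x) (at x within {0..1})"
    and theta_pos: "\<And>x. x \<in> {0<..<1} \<Longrightarrow> \<theta> x > 0"
    and theta_0: "\<theta> 0 = 0" and theta_1: "\<theta> 1 = 0"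
    and theta'_0: "\<theta>' 0 > 0" and theta'_1: "\<theta>' 1 < 0"
begin

lemma theta_cont: "continuous_on {0..1} \<theta>"
  using theta_deriv by (rule DERIV_continuous_on)

lemma theta_linear_near_0:
  obtains d where "d > 0" "\<And>u. u \<in> {0<..<1} \<Longrightarrow> u < d \<Longrightarrow> \<theta>' 0 / 2 * u \<le> \<theta> u"
proof -
  have "((\<lambda>y. (\<theta> y - \<theta> 0) / (y - 0)) \<longlongrightarrow> \<theta>' 0) (at 0 within {0..1})"
    using theta_deriv[of 0] by (simp add: has_field_derivative_iff)
  then have "\<forall>\<^sub>F y in at 0 within {0..1}. \<theta>' 0 / 2 < \<theta> y / y"
    using theta'_0 by (auto dest: order_tendstoD(1)[where a = "\<theta>' 0 / 2"] simp: theta_0)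
  then obtain d where "d > 0"
    and d: "\<And>y. y \<in> {0..1} \<Longrightarrow> y \<noteq> 0 \<Longrightarrow> dist y 0 < d \<Longrightarrow> \<theta>' 0 / 2 < \<theta> y / y"
    unfolding eventually_at by auto
  show thesis
  proof (rule that[of d])
    show "d > 0" by fact
  next
    fix u assume u: "u \<in> {0<..<1}" "u < d"
    then have "\<theta>' 0 / 2 < \<theta> u / u" using d[of u] by (simp add: dist_real_def)
    then show "\<theta>' 0 / 2 * u \<le> \<theta> u" using u by (simp add: field_simps)
  qed
qed

lemma theta_linear_near_1:
  obtains d where "d > 0" "\<And>u. u \<in> {0<..<1} \<Longrightarrow> 1 - u < d \<Longrightarrow> - \<theta>' 1 / 2 * (1 - u) \<le> \<theta> u"
proof -
  have "((\<lambda>y. (\<theta> y - \<theta> 1) / (y - 1)) \<longlongrightarrow> \<theta>' 1) (at 1 within {0..1})"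
    using theta_deriv[of 1] by (simp add: has_field_derivative_iff)
  then have "\<forall>\<^sub>F y in at 1 within {0..1}. \<theta> y / (y - 1) < \<theta>' 1 / 2"
    using theta'_1 by (auto dest: order_tendstoD(2)[where a = "\<theta>' 1 / 2"] simp: theta_1)
  then obtain d where "d > 0"
    and d: "\<And>y. y \<in> {0..1} \<Longrightarrow> y \<noteq> 1 \<Longrightarrow> dist y 1 < d \<Longrightarrow> \<theta> y / (y - 1) < \<theta>' 1 / 2"
    unfolding eventually_at by auto
  show thesis
  proof (rule that[of d])
    show "d > 0" by fact
  next
    fix u assume u: "u \<in> {0<..<1}" "1 - u < d"
    then have "\<theta> u / (u - 1) < \<theta>' 1 / 2" using d[of u] by (simp add: dist_real_def)
    then show "- \<theta>' 1 / 2 * (1 - u) \<le> \<theta> u" using u by (simp add: field_simps)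
  qed
qed

lemma theta_lower_bound:
  obtains c where "c > 0" "\<And>u. u \<in> {0<..<1} \<Longrightarrow> c * min u (1 - u) \<le> \<theta> u"
proof -
  obtain d0 where d0: "d0 > 0" "\<And>u. u \<in> {0<..<1} \<Longrightarrow> u < d0 \<Longrightarrow> \<theta>' 0 / 2 * u \<le> \<theta> u"
    using theta_linear_near_0 by blast
  obtain d1 where d1: "d1 > 0" "\<And>u. u \<in> {0<..<1} \<Longrightarrow> 1 - u < d1 \<Longrightarrow> - \<theta>' 1 / 2 * (1 - u) \<le> \<theta> u"
    using theta_linear_near_1 by blast
  define a where "a = min (d0 / 2) (1 / 2)"
  define b where "b = max (1 - d1 / 2) (1 / 2)"
  have ab: "0 < a" "a \<le> b" "b < 1" using d0(1) d1(1) by (auto simp: a_def b_def)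
  obtain m where m: "m \<in> {a..b}" "\<And>y. y \<in> {a..b} \<Longrightarrow> \<theta> m \<le> \<theta> y"
    using continuous_attains_inf[of "{a..b}" \<theta>] continuous_on_subset[OF theta_cont, of "{a..b}"] ab
    by auto
  define c where "c = min (min (\<theta>' 0 / 2) (- \<theta>' 1 / 2)) (\<theta> m)"
  have c: "c > 0" using theta'_0 theta'_1 theta_pos[of m] m(1) ab by (auto simp: c_def)
  have "c * min u (1 - u) \<le> \<theta> u" if u: "u \<in> {0<..<1}" for u
  proof -
    consider "u < a" | "u > b" | "u \<in> {a..b}" by fastforce
    then show ?thesis
    proof cases
      case 1
      then have "c * min u (1 - u) \<le> \<theta>' 0 / 2 * u" using u c by (intro mult_mono) (auto simp: c_def)
      also have "\<dots> \<le> \<theta> u" using 1 u d0(2)[of u] by (auto simp: a_def)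
      finally show ?thesis .
    next
      case 2
      then have "c * min u (1 - u) \<le> - \<theta>' 1 / 2 * (1 - u)" using u c
        by (intro mult_mono) (auto simp: c_def)
      also have "\<dots> \<le> \<theta> u" using 2 u d1(2)[of u] by (auto simp: b_def)
      finally show ?thesis .
    next
      case 3
      then have "c * min u (1 - u) \<le> \<theta> m * 1" using u c by (intro mult_mono) (auto simp: c_def)
      also have "\<dots> \<le> \<theta> u" using m(2)[OF 3] by simp
      finally show ?thesis .
    qed
  qed
  with c show thesis by (rule that)
qed

definition shah_density :: "real \<Rightarrow> real" where
  "shah_density u = 1 / sqrt (\<theta> u)"

lemma shah_density_pos: "u \<in> {0<..<1} \<Longrightarrow> shah_density u > 0"
  using theta_pos[of u] by (simp add: shah_density_def)

lemma shah_density_cont: "continuous_on {0<..<1} shah_density"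
  unfolding shah_density_def using theta_pos
  by (intro continuous_intros continuous_on_subset[OF theta_cont]) (auto simp: less_imp_neq[symmetric])

lemma shah_density_set_integrable: "set_integrable lborel {0..1} shah_density"
proof -
  obtain c where c: "c > 0" "\<And>u. u \<in> {0<..<1} \<Longrightarrow> c * min u (1 - u) \<le> \<theta> u"
    using theta_lower_bound by blast
  have bound: "norm (shah_density u) \<le> norm (1 / sqrt c * (1 / sqrt u + 1 / sqrt (1 - u)))"
    if u: "u \<in> {0<..<1}" for u
  proof -
    have "shah_density u \<le> 1 / sqrt (c * min u (1 - u))"
      unfolding shah_density_def using c u theta_pos[OF u]
      by (intro divide_left_mono real_sqrt_le_mono) (auto intro!: mult_pos_pos)
    also have "\<dots> = 1 / sqrt c * (1 / sqrt (min u (1 - u)))" by (simp add: real_sqrt_mult)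
    also have "\<dots> \<le> 1 / sqrt c * (1 / sqrt u + 1 / sqrt (1 - u))"
      using c u by (intro mult_left_mono) (auto simp: min_def)
    finally show ?thesis using shah_density_pos[OF u] u c(1) by simp
  qed
  have "(\<lambda>x. indicator {0<..<1} x *\<^sub>R shah_density x) \<in> borel_measurable borel"
    by (intro borel_measurable_continuous_on_indicator shah_density_cont) auto
  then have "set_borel_measurable lborel {0<..<1} shah_density"
    by (simp add: set_borel_measurable_def)
  moreover have "AE u in lborel. u \<in> {0<..<1} \<longrightarrow>
      norm (shah_density u) \<le> norm (1 / sqrt c * (1 / sqrt u + 1 / sqrt (1 - u)))"
    using bound by (intro AE_I2) auto
  ultimately have "set_integrable lborel {0<..<1} shah_density"
    by (intro set_integrable_bound[OF set_integrable_mult_right[OF inv_sqrt_boundary_integrable]])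
  moreover have "(\<lambda>x. indicator {0<..<1} x *\<^sub>R shah_density x)
      = (\<lambda>x. indicator {0..1} x *\<^sub>R shah_density x)"
    by (rule ext) (auto simp: indicator_def shah_density_def theta_0 theta_1 less_le)
  ultimately show ?thesis unfolding set_integrable_def by metis
qed

lemma shah_density_integrable_on: "0 \<le> a \<Longrightarrow> b \<le> 1 \<Longrightarrow> shah_density integrable_on {a..b}"
  using set_borel_integral_eq_integral(1)[OF shah_density_set_integrable]
  by (rule integrable_on_subinterval) auto

definition shah_coord :: "real \<Rightarrow> real" where
  "shah_coord x = integral {0..x} shah_density"

lemma shah_coord_diff:
  "0 \<le> x \<Longrightarrow> x \<le> y \<Longrightarrow> y \<le> 1 \<Longrightarrow> integral {x..y} shah_density = shah_coord y - shah_coord x"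
  unfolding shah_coord_def
  using Henstock_Kurzweil_Integration.integral_combine[of 0 x y shah_density]
    shah_density_integrable_on[of 0 y] by simp

lemma shah_dist_eq_coord:
  assumes "x \<in> {0..1}" "y \<in> {0..1}"
  shows "shah_dist \<theta> x y = \<bar>shah_coord x - shah_coord y\<bar>"
proof -
  have LBINT: "(LBINT u=a..b. shah_density u) = shah_coord b - shah_coord a"
    if "0 \<le> a" "a \<le> b" "b \<le> 1" for a b
  proof -
    have "set_integrable lborel {a..b} shah_density"
      by (rule set_integrable_subset[OF shah_density_set_integrable]) (use that in auto)
    then show ?thesis using that by (simp add: interval_integral_eq_integral shah_coord_diff)
  qed
  have "shah_dist \<theta> x y = \<bar>LBINT u=x..y. shah_density u\<bar>"
    by (simp add: shah_dist_def shah_density_def)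
  also have "\<dots> = \<bar>shah_coord x - shah_coord y\<bar>"
  proof (cases "x \<le> y")
    case True
    then show ?thesis using assms LBINT[of x y] by (simp add: abs_minus_commute)
  next
    case False
    then show ?thesis using assms LBINT[of y x]
      by (simp add: interval_integral_endpoints_reverse[of x y])
  qed
  finally show ?thesis .
qed

lemma shah_coord_cont: "continuous_on {0..1} shah_coord"
  unfolding shah_coord_def
  by (rule indefinite_integral_continuous_1, rule shah_density_integrable_on) auto

lemma shah_coord_deriv:
  assumes "x \<in> {0<..<1}"
  shows "(shah_coord has_real_derivative shah_density x) (at x)"
proof -
  have "isCont shah_density x"
    using assms by (intro continuous_on_interior[OF shah_density_cont]) auto
  then have "(shah_coord has_vector_derivative shah_density x) (at x within ({0..1} - {}))"
    unfolding shah_coord_def[abs_def] using assms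
    by (intro integral_has_vector_derivative_continuous_at shah_density_integrable_on)
       (auto intro: continuous_at_imp_continuous_at_within)
  moreover have "at x within ({0..1} - {}) = at x" using assms by (intro at_within_interior) auto
  ultimately show ?thesis by (simp add: has_real_derivative_iff_has_vector_derivative)
qed

lemma shah_coord_strict_mono:
  assumes "0 \<le> x" "x < y" "y \<le> 1"
  shows "shah_coord x < shah_coord y"
proof (rule DERIV_pos_imp_increasing_open[OF \<open>x < y\<close>])
  fix z assume "x < z" "z < y"
  then have "z \<in> {0<..<1}" using assms by auto
  then show "\<exists>D. (shah_coord has_real_derivative D) (at z) \<and> D > 0"
    using shah_coord_deriv shah_density_pos by blast
qed (use assms in \<open>auto intro: continuous_on_subset[OF shah_coord_cont]\<close>)

lemma shah_coord_mono: "0 \<le> x \<Longrightarrow> x \<le> y \<Longrightarrow> y \<le> 1 \<Longrightarrow> shah_coord x \<le> shah_coord y"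
  using shah_coord_strict_mono[of x y] by (cases "x = y") auto

lemma shah_coord_inj: "inj_on shah_coord {0..1}"
proof (rule linorder_inj_onI')
  fix x y :: real assume "x \<in> {0..1}" "y \<in> {0..1}" "x < y"
  then show "shah_coord x \<noteq> shah_coord y" using shah_coord_strict_mono[of x y] by simp
qed

lemma shah_coord_inverse_uniformly_continuous:
  assumes "e > 0"
  obtains d where "d > 0"
    "\<And>x y. x \<in> {0..1} \<Longrightarrow> y \<in> {0..1} \<Longrightarrow> \<bar>shah_coord x - shah_coord y\<bar> < d \<Longrightarrow> \<bar>x - y\<bar> < e"
proof -
  define g where "g = inv_into {0..1} shah_coord"
  have g: "g (shah_coord x) = x" if "x \<in> {0..1}" for x
    using that shah_coord_inj by (simp add: g_def)
  then have "continuous_on (shah_coord ` {0..1}) g"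
    by (intro continuous_on_inv shah_coord_cont) auto
  then have "uniformly_continuous_on (shah_coord ` {0..1}) g"
    by (intro compact_uniformly_continuous compact_continuous_image shah_coord_cont compact_Icc)
  with assms obtain d where "d > 0"
    "\<And>s s'. s \<in> shah_coord ` {0..1} \<Longrightarrow> s' \<in> shah_coord ` {0..1} \<Longrightarrow> dist s' s < d \<Longrightarrow> dist (g s') (g s) < e"
    unfolding uniformly_continuous_on_def by metis
  then show thesis using g by (intro that[of d]) (force simp: dist_real_def)+
qed

end

section \<open>The JKO scheme for the replicator equation\<close>

lemma pc_interp_ceiling:
  fixes h t :: real
  assumes "h > 0" "t \<ge> 0"
  shows "pc_interp h Y t = Y (nat \<lceil>t / h\<rceil>)" "t \<le> nat \<lceil>t / h\<rceil> * h" "nat \<lceil>t / h\<rceil> * h < t + h"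
proof -
  have "real (nat \<lceil>t / h\<rceil>) = of_int \<lceil>t / h\<rceil>" using assms by simp
  then have "t / h \<le> nat \<lceil>t / h\<rceil>" "nat \<lceil>t / h\<rceil> < t / h + 1" by linarith+
  then show "t \<le> nat \<lceil>t / h\<rceil> * h" "nat \<lceil>t / h\<rceil> * h < t + h"
    using assms(1) by (simp_all add: field_simps)
qed (simp add: pc_interp_def)

lemma jko_sequence_in_Icc:
  assumes "Y 0 \<in> {0..1}" "\<And>n. jko_step \<theta> V h (Y n) (Y (Suc n))"
  shows "Y n \<in> {0..1}"
  using assms by (cases n) (auto simp: jko_step_def)

locale replicator = shahshahani_weight +
  fixes V V' V'' :: "real \<Rightarrow> real"
  assumes theta'_cont: "continuous_on {0..1} \<theta>'"
    and V_deriv: "\<And>x. x \<in> {0..1} \<Longrightarrow> (V has_real_derivative V' x) (at x within {0..1})"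
    and V'_deriv: "\<And>x. x \<in> {0..1} \<Longrightarrow> (V' has_real_derivative V'' x) (at x within {0..1})"
    and V''_cont: "continuous_on {0..1} V''"
begin

definition F :: "real \<Rightarrow> real" where
  "F x = - \<theta> x * V' x"

definition G :: "real \<Rightarrow> real" where
  "G x = sqrt (\<theta> x) * V' x"

lemma V'_cont: "continuous_on {0..1} V'"
  using V'_deriv by (rule DERIV_continuous_on)

lemma G_cont: "continuous_on {0..1} G"
  unfolding G_def by (intro continuous_intros theta_cont V'_cont)

lemma F_cont: "continuous_on {0..1} F"
  unfolding F_def by (intro continuous_intros theta_cont V'_cont)

lemma F_0: "F 0 = 0" and F_1: "F 1 = 0" and G_0: "G 0 = 0" and G_1: "G 1 = 0"
  by (simp_all add: F_def G_def theta_0 theta_1)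

lemma G_mult_shah_density: "x \<in> {0<..<1} \<Longrightarrow> G x * shah_density x = V' x"
  using theta_pos[of x] by (simp add: G_def shah_density_def)

lemma F_mult_shah_density:
  assumes "x \<in> {0<..<1}"
  shows "F x * shah_density x = - G x"
proof -
  have "\<theta> x / sqrt (\<theta> x) = sqrt (\<theta> x)" using theta_pos[OF assms] by (intro real_div_sqrt) simp
  moreover have "F x * shah_density x = - ((\<theta> x / sqrt (\<theta> x)) * V' x)"
    by (simp add: F_def shah_density_def)
  ultimately show ?thesis by (simp add: G_def)
qed

lemma F_lipschitz: obtains K where "K-lipschitz_on {0..1} F"
proof -
  define F' where "F' x = - (\<theta>' x * V' x + \<theta> x * V'' x)" for x
  have "continuous_on {0..1} F'"
    unfolding F'_def by (intro continuous_intros theta_cont theta'_cont V'_cont V''_cont)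
  then obtain B where B: "B \<ge> 0" "\<And>x. x \<in> {0..1} \<Longrightarrow> norm (F' x) \<le> B"
    using continuous_on_compact_bound[OF compact_Icc] by blast
  have F_deriv: "(F has_real_derivative F' x) (at x within {0..1})" if "x \<in> {0..1}" for x
    unfolding F_def[abs_def] F'_def using theta_deriv[OF that] V'_deriv[OF that]
    by (auto intro!: derivative_eq_intros simp: algebra_simps)
  have "B-lipschitz_on {0..1} F"
  proof (rule lipschitz_onI)
    fix x y :: real assume "x \<in> {0..1}" "y \<in> {0..1}"
    then show "dist (F x) (F y) \<le> B * dist x y"
      unfolding dist_norm by (intro field_differentiable_bound[OF _ F_deriv B(2)]) auto
  qed (rule B(1))
  then show thesis by (rule that)
qed

lemma G_deriv:
  assumes "x \<in> {0<..<1}"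
  shows "(G has_real_derivative (\<theta>' x * V' x / 2 + \<theta> x * V'' x) * shah_density x) (at x)"
proof -
  define r where "r = sqrt (\<theta> x)"
  have r: "r > 0" "\<theta> x = r * r" using theta_pos[OF assms] by (simp_all add: r_def)
  have "(G has_real_derivative inverse r / 2 * \<theta>' x * V' x + r * V'' x) (at x)"
    unfolding G_def[abs_def] r_def using r
    by (auto intro!: derivative_eq_intros DERIV_interior_Icc[OF theta_deriv assms]
        DERIV_interior_Icc[OF V'_deriv assms])
  moreover have "inverse r / 2 * \<theta>' x * V' x + r * V'' x = (\<theta>' x * V' x / 2 + \<theta> x * V'' x) * (1 / r)"
    using r by (simp add: field_simps)
  ultimately show ?thesis by (simp add: shah_density_def r_def)
qed

lemma G_lipschitz_coord:
  obtains L where "L \<ge> 0"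
    "\<And>x y. x \<in> {0..1} \<Longrightarrow> y \<in> {0..1} \<Longrightarrow> \<bar>G x - G y\<bar> \<le> L * \<bar>shah_coord x - shah_coord y\<bar>"
proof -
  have "continuous_on {0..1} (\<lambda>x. \<theta>' x * V' x / 2 + \<theta> x * V'' x)"
    by (intro continuous_intros theta_cont theta'_cont V'_cont V''_cont) auto
  then obtain B where B: "B \<ge> 0" "\<And>x. x \<in> {0..1} \<Longrightarrow> norm (\<theta>' x * V' x / 2 + \<theta> x * V'' x) \<le> B"
    using continuous_on_compact_bound[OF compact_Icc] by blast
  have ordered: "\<bar>G y - G x\<bar> \<le> B * (shah_coord y - shah_coord x)"
    if "0 \<le> x" "x \<le> y" "y \<le> 1" for x y
  proof (rule DERIV_dominated_imp_bound[OF \<open>x \<le> y\<close>])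
    show "continuous_on {x..y} G" "continuous_on {x..y} shah_coord"
      using that
      by (auto intro: continuous_on_subset[OF G_cont] continuous_on_subset[OF shah_coord_cont])
    fix z assume "z \<in> {x<..<y}"
    then have z: "z \<in> {0<..<1}" using that by auto
    show "(G has_real_derivative (\<theta>' z * V' z / 2 + \<theta> z * V'' z) * shah_density z) (at z)"
      by (rule G_deriv[OF z])
    show "(shah_coord has_real_derivative shah_density z) (at z)" by (rule shah_coord_deriv[OF z])
    show "\<bar>(\<theta>' z * V' z / 2 + \<theta> z * V'' z) * shah_density z\<bar> \<le> B * shah_density z"
      using B(2)[of z] z shah_density_pos[OF z] by (simp add: abs_mult mult_right_mono)
  qed
  have "\<bar>G x - G y\<bar> \<le> B * \<bar>shah_coord x - shah_coord y\<bar>" if "x \<in> {0..1}" "y \<in> {0..1}" for x y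
  proof (cases "x \<le> y")
    case True
    then show ?thesis
      using ordered[of x y] shah_coord_mono[of x y] that by (simp add: abs_minus_commute)
  next
    case False
    then show ?thesis using ordered[of y x] shah_coord_mono[of y x] that by simp
  qed
  with B(1) show thesis by (rule that)
qed

lemma jko_step_iff_coord:
  assumes "x \<in> {0..1}"
  shows "jko_step \<theta> V h x x' \<longleftrightarrow> x' \<in> {0..1} \<and> (\<forall>y\<in>{0..1}.
    (shah_coord x' - shah_coord x)\<^sup>2 / (2 * h) + V x' \<le> (shah_coord y - shah_coord x)\<^sup>2 / (2 * h) + V y)"
  using assms by (auto simp: jko_step_def shah_dist_eq_coord)

lemma coord_euler_map_strict_mono:
  assumes lip: "\<And>x y. x \<in> {0..1} \<Longrightarrow> y \<in> {0..1} \<Longrightarrow> \<bar>G x - G y\<bar> \<le> L * \<bar>shah_coord x - shah_coord y\<bar>"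
    and h: "h > 0" "h * L < 1" and zw: "0 \<le> z" "z < w" "w \<le> 1"
  shows "shah_coord z + h * G z < shah_coord w + h * G w"
proof -
  have S: "shah_coord z < shah_coord w" using shah_coord_strict_mono zw by blast
  then have "G z - G w \<le> L * (shah_coord w - shah_coord z)"
    using lip[of z w] zw by (simp add: abs_le_iff)
  then have "h * (G z - G w) \<le> h * L * (shah_coord w - shah_coord z)"
    using h(1) by (simp add: mult_left_mono mult.assoc)
  moreover have "h * L * (shah_coord w - shah_coord z) < shah_coord w - shah_coord z"
    using h(2) S by (simp add: mult_less_cancel_right1)
  ultimately show ?thesis by (simp add: algebra_simps)
qed

lemma jko_functional_deriv:
  assumes "h > 0" "z \<in> {0<..<1}"
  shows "((\<lambda>z. (shah_coord z - shah_coord x)\<^sup>2 / (2 * h) + V z) has_real_derivative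
    (shah_coord z + h * G z - shah_coord x) * shah_density z / h) (at z)"
proof -
  have "((\<lambda>z. (shah_coord z - shah_coord x)\<^sup>2 / (2 * h) + V z) has_real_derivative
      (shah_coord z - shah_coord x) * shah_density z / h + V' z) (at z)"
    using assms(1)
    by (auto intro!: derivative_eq_intros shah_coord_deriv[OF assms(2)]
        DERIV_interior_Icc[OF V_deriv assms(2)]
        simp: field_simps)
  then show ?thesis using G_mult_shah_density[OF assms(2)] assms(1) by (simp add: field_simps)
qed

lemma jko_step_euler_lagrange:
  assumes lip: "\<And>x y. x \<in> {0..1} \<Longrightarrow> y \<in> {0..1} \<Longrightarrow> \<bar>G x - G y\<bar> \<le> L * \<bar>shah_coord x - shah_coord y\<bar>"
    and h: "h > 0" "h * L < 1" and x: "x \<in> {0..1}" and step: "jko_step \<theta> V h x x'"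
  shows "shah_coord x' + h * G x' = shah_coord x"
proof -
  define \<psi> where "\<psi> z = shah_coord z + h * G z - shah_coord x" for z
  have \<psi>_strict: "\<psi> z < \<psi> w" if "0 \<le> z" "z < w" "w \<le> 1" for z w
    using coord_euler_map_strict_mono[OF lip h that] by (simp add: \<psi>_def)
  have "\<psi> 0 \<le> 0" "0 \<le> \<psi> 1"
    using shah_coord_mono[of 0 x] shah_coord_mono[of x 1] x
    by (simp_all add: \<psi>_def G_0 G_1 shah_coord_def)
  moreover have "continuous_on {0..1} \<psi>"
    unfolding \<psi>_def by (intro continuous_intros shah_coord_cont G_cont)
  ultimately obtain r where r: "r \<in> {0..1}" "\<psi> r = 0" using IVT'[of \<psi> 0 0 1] by auto
  have "x' = r"
  proof (rule argmin_at_sign_change[OF _ r(1) _ jko_functional_deriv[OF h(1)]])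
    show "continuous_on {0..1} (\<lambda>z. (shah_coord z - shah_coord x)\<^sup>2 / (2 * h) + V z)"
      using h(1) by (intro continuous_intros shah_coord_cont DERIV_continuous_on[OF V_deriv]) auto
    show "x' \<in> {0..1}"
      "\<And>y. y \<in> {0..1} \<Longrightarrow> (shah_coord x' - shah_coord x)\<^sup>2 / (2 * h) + V x'
        \<le> (shah_coord y - shah_coord x)\<^sup>2 / (2 * h) + V y"
      using step x by (auto simp: jko_step_iff_coord)
    fix z assume "z \<in> {0<..<r}"
    then have "\<psi> z < 0" "shah_density z > 0" using \<psi>_strict[of z r] r shah_density_pos[of z] by auto
    then show "(shah_coord z + h * G z - shah_coord x) * shah_density z / h < 0"
      using h(1) by (simp add: \<psi>_def mult_neg_pos divide_neg_pos)
  next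
    fix z assume "z \<in> {r<..<1}"
    then have "\<psi> z > 0" "shah_density z > 0" using \<psi>_strict[of r z] r shah_density_pos[of z] by auto
    then show "(shah_coord z + h * G z - shah_coord x) * shah_density z / h > 0"
      using h(1) by (simp add: \<psi>_def)
  qed
  then show ?thesis using r(2) by (simp add: \<psi>_def)
qed

lemma replicator_sol_iff:
  "replicator_sol \<theta> V' x0 X \<longleftrightarrow>
    X 0 = x0 \<and> (\<forall>t\<ge>0. X t \<in> {0..1} \<and> (X has_real_derivative F (X t)) (at t within {0..}))"
  by (simp add: replicator_sol_def F_def)

lemma replicator_sol_unique:
  assumes "replicator_sol \<theta> V' x0 Y" "replicator_sol \<theta> V' x0 Z" "t \<ge> 0"
  shows "Y t = Z t"
proof -
  obtain K where K: "K-lipschitz_on {0..1} F" by (rule F_lipschitz)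
  have Y: "Y 0 = x0" "\<And>s. s \<ge> 0 \<Longrightarrow> Y s \<in> {0..1} \<and> (Y has_real_derivative F (Y s)) (at s within {0..})"
    using assms(1) by (simp_all add: replicator_sol_iff)
  have Z: "Z 0 = x0" "\<And>s. s \<ge> 0 \<Longrightarrow> Z s \<in> {0..1} \<and> (Z has_real_derivative F (Z s)) (at s within {0..})"
    using assms(2) by (simp_all add: replicator_sol_iff)
  show ?thesis by (rule lipschitz_ode_unique[OF K _ Y(2) Z(2) assms(3)]) (simp add: Y(1) Z(1))
qed

lemma replicator_sol_exists:
  assumes "x0 \<in> {0..1}"
  obtains X where "X 0 = x0"
    "\<And>t. t \<ge> 0 \<Longrightarrow> X t \<in> {0..1} \<and> (X has_real_derivative F (X t)) (at t)"
    "\<And>t. t \<ge> 0 \<Longrightarrow> ((\<lambda>t. shah_coord (X t)) has_real_derivative - G (X t)) (at t)"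
proof -
  obtain K where "K-lipschitz_on {0..1} F" by (rule F_lipschitz)
  then obtain X where X0: "X 0 = x0"
    and X: "\<And>t. t \<ge> 0 \<Longrightarrow> X t \<in> {0..1} \<and> (X has_real_derivative F (X t)) (at t)"
    and interior_or_const: "(\<forall>t\<ge>0. X t \<in> {0<..<1}) \<or> (F x0 = 0 \<and> (\<forall>t. X t = x0))"
    using lipschitz_ode_exists_Icc[OF _ F_0 F_1 assms] by blast
  have S_deriv: "((\<lambda>t. shah_coord (X t)) has_real_derivative - G (X t)) (at t)" if "t \<ge> 0" for t
    using interior_or_const
  proof
    assume "\<forall>t\<ge>0. X t \<in> {0<..<1}"
    then have Xt: "X t \<in> {0<..<1}" using that by simp
    have "((\<lambda>t. shah_coord (X t)) has_real_derivative shah_density (X t) * F (X t)) (at t)"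
      by (rule DERIV_chain2[where f=shah_coord and g=X, OF shah_coord_deriv[OF Xt]])
        (use X[OF that] in auto)
    then show ?thesis using F_mult_shah_density[OF Xt] by (simp add: mult.commute)
  next
    assume const: "F x0 = 0 \<and> (\<forall>t. X t = x0)"
    then have "X = (\<lambda>t. x0)" "G x0 = 0" by (auto simp: F_def G_def)
    then show ?thesis by simp
  qed
  show thesis by (rule that[OF X0 X S_deriv])
qed

lemma jko_coord_error:
  assumes lip: "\<And>x y. x \<in> {0..1} \<Longrightarrow> y \<in> {0..1} \<Longrightarrow> \<bar>G x - G y\<bar> \<le> L * \<bar>shah_coord x - shah_coord y\<bar>"
    and "L \<ge> 0" and bnd: "\<And>x. x \<in> {0..1} \<Longrightarrow> \<bar>G x\<bar> \<le> M"
    and X: "X 0 = x0" "\<And>t. t \<ge> 0 \<Longrightarrow> X t \<in> {0..1}"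
      "\<And>t. t \<ge> 0 \<Longrightarrow> ((\<lambda>t. shah_coord (X t)) has_real_derivative - G (X t)) (at t)"
    and Y: "Y 0 = x0" "\<And>n. jko_step \<theta> V h (Y n) (Y (Suc n))"
    and h: "h > 0" "h * L \<le> 1 / 2" and "n * h \<le> T"
  shows "\<bar>shah_coord (Y n) - shah_coord (X (n * h))\<bar> \<le> T * (L * M) * exp (2 * L * T) * h"
proof -
  \<comment> \<open>In the coordinate \<open>\<sigma>\<close> the scheme is the implicit Euler scheme for \<open>\<sigma>' = - f \<sigma>\<close>.\<close>
  define f where "f p = G (inv_into {0..1} shah_coord p)" for p
  have f: "f (shah_coord x) = G x" if "x \<in> {0..1}" for x
    using that shah_coord_inj by (simp add: f_def)
  have "L-lipschitz_on (shah_coord ` {0..1}) f"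
    using lip \<open>L \<ge> 0\<close> by (intro lipschitz_onI) (auto simp: f dist_real_def)
  moreover have "\<And>p. p \<in> shah_coord ` {0..1} \<Longrightarrow> \<bar>f p\<bar> \<le> M" using bnd by (auto simp: f)
  moreover have "Y n \<in> {0..1}" for n
    using jko_sequence_in_Icc[of Y \<theta> V h n] X(1) X(2)[of 0] Y by auto
  moreover have "shah_coord (Y (Suc n)) + h * f (shah_coord (Y (Suc n))) = shah_coord (Y n)" for n
    using jko_step_euler_lagrange[OF lip h(1) _ _ Y(2)[of n]] h \<open>Y n \<in> {0..1}\<close> \<open>Y (Suc n) \<in> {0..1}\<close>
    by (simp add: f)
  ultimately have "\<bar>shah_coord (Y n) - shah_coord (X (n * h))\<bar>
      \<le> n * (L * M * h\<^sup>2) * exp (2 * L * (n * h))"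
    using X Y(1) h by (intro implicit_euler_error[where u="\<lambda>t. shah_coord (X t)"]) (auto simp: f)
  also have "\<dots> = (n * h) * (L * M) * exp (2 * L * (n * h)) * h" by (simp add: power2_eq_square)
  also have "\<dots> \<le> T * (L * M) * exp (2 * L * T) * h"
    using \<open>n * h \<le> T\<close> \<open>L \<ge> 0\<close> bnd[of 0] h(1) order_trans[OF _ \<open>n * h \<le> T\<close>, of 0]
    by (intro mult_right_mono mult_mono) (auto intro!: mult_nonneg_nonneg mult_left_mono)
  finally show ?thesis .
qed

lemma jko_interpolation_converges:
  assumes X: "X 0 = x0" "\<And>t. t \<ge> 0 \<Longrightarrow> X t \<in> {0..1} \<and> (X has_real_derivative F (X t)) (at t)"
      "\<And>t. t \<ge> 0 \<Longrightarrow> ((\<lambda>t. shah_coord (X t)) has_real_derivative - G (X t)) (at t)"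
    and Xs: "\<forall>h>0. Xs h 0 = x0 \<and> (\<forall>n. jko_step \<theta> V h (Xs h n) (Xs h (Suc n)))"
    and "T \<ge> 0"
  shows "uniform_limit {0..T} (\<lambda>h t. pc_interp h (Xs h) t) X (at_right 0)"
  unfolding uniform_limit_iff
proof (intro allI impI)
  fix \<epsilon> :: real assume "\<epsilon> > 0"
  obtain L where L: "L \<ge> 0"
    "\<And>x y. x \<in> {0..1} \<Longrightarrow> y \<in> {0..1} \<Longrightarrow> \<bar>G x - G y\<bar> \<le> L * \<bar>shah_coord x - shah_coord y\<bar>"
    using G_lipschitz_coord by blast
  obtain M where M: "M \<ge> 0" "\<And>x. x \<in> {0..1} \<Longrightarrow> norm (G x) \<le> M"
    using continuous_on_compact_bound[OF compact_Icc G_cont] by blast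
  obtain MF where MF: "MF \<ge> 0" "\<And>x. x \<in> {0..1} \<Longrightarrow> norm (F x) \<le> MF"
    using continuous_on_compact_bound[OF compact_Icc F_cont] by blast
  obtain \<delta> where \<delta>: "\<delta> > 0"
    "\<And>x y. x \<in> {0..1} \<Longrightarrow> y \<in> {0..1} \<Longrightarrow> \<bar>shah_coord x - shah_coord y\<bar> < \<delta> \<Longrightarrow> \<bar>x - y\<bar> < \<epsilon> / 2"
    using shah_coord_inverse_uniformly_continuous[of "\<epsilon> / 2"] \<open>\<epsilon> > 0\<close> by auto
  define A where "A = (T + 1) * (L * M) * exp (2 * L * (T + 1))"
  have A: "A \<ge> 0" using \<open>T \<ge> 0\<close> L(1) M(1) by (simp add: A_def)
  define b where "b = min (min 1 (1 / (2 * L + 1))) (min (\<delta> / (A + 1)) (\<epsilon> / (2 * (MF + 1))))"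
  have "b > 0" using L(1) \<delta>(1) A \<open>\<epsilon> > 0\<close> MF(1) by (simp add: b_def)
  have close: "\<bar>pc_interp h (Xs h) t - X t\<bar> < \<epsilon>" if h: "0 < h" "h < b" and t: "t \<in> {0..T}" for h t
  proof -
    define N where "N = nat \<lceil>t / h\<rceil>"
    have N: "pc_interp h (Xs h) t = Xs h N" "t \<le> N * h" "N * h < t + h"
      using pc_interp_ceiling(1)[of h t "Xs h"] pc_interp_ceiling(2,3)[of h t] h t
      by (simp_all add: N_def)
    have "h * (2 * L + 1) < 1" "h * (A + 1) < \<delta>" "h * (2 * (MF + 1)) < \<epsilon>"
      using h L(1) A MF(1) by (auto simp: b_def field_simps)
    then have hL: "h * L \<le> 1 / 2" using h by (simp add: algebra_simps)
    have NhT: "N * h \<le> T + 1" using N(3) t h(2) by (simp add: b_def)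
    have "\<bar>shah_coord (Xs h N) - shah_coord (X (N * h))\<bar> \<le> A * h"
      unfolding A_def using Xs h(1) X M(2)
      by (intro jko_coord_error[OF L(2,1) _ X(1) _ X(3) _ _ h(1) hL NhT]) auto
    also have "\<dots> < \<delta>" using \<open>h * (A + 1) < \<delta>\<close> h(1) by (simp add: algebra_simps)
    finally have "\<bar>shah_coord (Xs h N) - shah_coord (X (N * h))\<bar> < \<delta>" .
    moreover have "Xs h N \<in> {0..1}" "X (N * h) \<in> {0..1}"
      using jko_sequence_in_Icc[of "Xs h" \<theta> V h N] Xs X(1) X(2)[of 0] X(2)[of "N * h"] N(2) t h(1)
      by auto
    ultimately have "\<bar>Xs h N - X (N * h)\<bar> < \<epsilon> / 2" using \<delta>(2) by blast
    moreover have "\<bar>X (N * h) - X t\<bar> \<le> MF * \<bar>N * h - t\<bar>"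
      by (rule DERIV_bounded_imp_lipschitz_nonneg[where f'="\<lambda>t. F (X t)"])
        (use X(2) MF(2) N(2) t in auto)
    moreover have "MF * \<bar>N * h - t\<bar> \<le> MF * h" using N MF(1) by (intro mult_left_mono) auto
    moreover have "MF * h < \<epsilon> / 2" using \<open>h * (2 * (MF + 1)) < \<epsilon>\<close> h(1) MF(1) by (simp add: algebra_simps)
    ultimately show ?thesis unfolding N(1) by linarith
  qed
  show "\<forall>\<^sub>F h in at_right 0. \<forall>t\<in>{0..T}. dist (pc_interp h (Xs h) t) (X t) < \<epsilon>"
    using eventually_at_right_real[OF \<open>b > 0\<close>]
    by eventually_elim (use close in \<open>auto simp: dist_real_def\<close>)
qed

end

lemma replicator_if_smooth:
  assumes "smooth_on \<theta> {0..1}" "\<forall>x\<in>{0<..<1}. \<theta> x > 0" "\<theta> 0 = 0" "\<theta> 1 = 0"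
    and "\<exists>a>0. (\<theta> has_real_derivative a) (at 0 within {0..1})"
    and "\<exists>b<0. (\<theta> has_real_derivative b) (at 1 within {0..1})"
    and "smooth_on V {0..1}" "\<forall>x\<in>{0..1}. (V has_real_derivative V' x) (at x within {0..1})"
  obtains \<theta>' V'' where "replicator \<theta> \<theta>' V V' V''"
proof -
  obtain \<theta>' \<theta>'' where "\<forall>x\<in>{0..1}. (\<theta> has_real_derivative \<theta>' x) (at x within {0..1})"
    "\<forall>x\<in>{0..1}. (\<theta>' has_real_derivative \<theta>'' x) (at x within {0..1})"
    by (rule smooth_on_imp_C2[OF assms(1)])
  note \<theta>' = this[rule_format]
  obtain V1 V2 where "\<forall>x\<in>{0..1}. (V has_real_derivative V1 x) (at x within {0..1})"
    "\<forall>x\<in>{0..1}. (V1 has_real_derivative V2 x) (at x within {0..1})" "continuous_on {0..1} V2"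
    by (rule smooth_on_imp_C2[OF assms(7)])
  note V = this[rule_format]
  have "V' x = V1 x" if "x \<in> {0..1}" for x
    using has_real_derivative_unique_Icc[of 0 1 x V] assms(8) V(1) that by auto
  then have V'_deriv: "(V' has_real_derivative V2 x) (at x within {0..1})" if "x \<in> {0..1}" for x
    using has_field_derivative_transform_within[OF V(2) zero_less_one] that by auto
  have "\<theta>' 0 > 0" "\<theta>' 1 < 0"
    using assms(5,6) has_real_derivative_unique_Icc[OF zero_less_one _ _ \<theta>'(1)] by fastforce+
  then have "replicator \<theta> \<theta>' V V' V2"
  proof unfold_locales
    show "continuous_on {0..1} \<theta>'" using \<theta>'(2) by (rule DERIV_continuous_on)
  qed (use assms(2-4,8) \<theta>'(1) V(3) V'_deriv in simp_all)
  then show thesis by (rule that)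
qed

theorem theorem4:
  fixes \<theta> V V' :: "real \<Rightarrow> real" and XI :: real
  assumes "smooth_on \<theta> {0..1}"
    and "\<forall>x\<in>{0<..<1}. \<theta> x > 0"
    and "\<theta> 0 = 0" and "\<theta> 1 = 0"
    and "\<exists>a>0. (\<theta> has_real_derivative a) (at 0 within {0..1})"
    and "\<exists>b<0. (\<theta> has_real_derivative b) (at 1 within {0..1})"
    and "smooth_on V {0..1}"
    and "\<forall>x\<in>{0..1}. (V has_real_derivative V' x) (at x within {0..1})"
    and "XI \<in> {0..1}"
  shows "\<exists>X. replicator_sol \<theta> V' XI X
     \<and> (\<forall>Y. replicator_sol \<theta> V' XI Y \<longrightarrow> (\<forall>t\<ge>0. Y t = X t))
     \<and> (\<forall>Xs :: real \<Rightarrow> nat \<Rightarrow> real.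
          (\<forall>h>0. Xs h 0 = XI \<and> (\<forall>n. jko_step \<theta> V h (Xs h n) (Xs h (Suc n)))) \<longrightarrow>
          (\<forall>T>0. uniform_limit {0..T} (\<lambda>h t. pc_interp h (Xs h) t) X (at_right 0)))"
proof -
  obtain \<theta>' V'' where "replicator \<theta> \<theta>' V V' V''"
    by (rule replicator_if_smooth[OF assms(1-8)])
  then interpret replicator \<theta> \<theta>' V V' V'' .
  obtain X where X: "X 0 = XI" "\<And>t. t \<ge> 0 \<Longrightarrow> X t \<in> {0..1} \<and> (X has_real_derivative F (X t)) (at t)"
    "\<And>t. t \<ge> 0 \<Longrightarrow> ((\<lambda>t. shah_coord (X t)) has_real_derivative - G (X t)) (at t)"
    using replicator_sol_exists[OF assms(9)] by blast
  have "replicator_sol \<theta> V' XI X"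
    using X(1,2) by (simp add: replicator_sol_iff has_field_derivative_at_within)
  moreover have "\<forall>Y. replicator_sol \<theta> V' XI Y \<longrightarrow> (\<forall>t\<ge>0. Y t = X t)"
    using replicator_sol_unique calculation by blast
  moreover have "uniform_limit {0..T} (\<lambda>h t. pc_interp h (Xs h) t) X (at_right 0)"
    if "\<forall>h>0. Xs h 0 = XI \<and> (\<forall>n. jko_step \<theta> V h (Xs h n) (Xs h (Suc n)))" "T > 0" for Xs T
    using jko_interpolation_converges[OF X that(1)] that(2) by simp
  ultimately show ?thesis by blast
qed

end
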